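(* Let $d$ be a positive integer, let $\varepsilon>0$, and let $\omega_N\subset\mathbb{S}^{d-1}$ be a set of $N\ge 3$ distinct points. Assume that for any three distinct points $x,y,z\in\omega_N$, $$\langle x,y\rangle\langle x,z\rangle\langle y,z\rangle\le-\varepsilon.$$ Then $N\le 1+\frac{1}{\varepsilon}$.
   Context: $\langle\cdot,\cdot\rangle$ is the Euclidean inner product and $\mathbb{S}^{d-1}$ is the unit sphere in $\mathbb{R}^d$. *)

theory Defs
  imports "HOL-Analysis.Analysis"
begin

end

theory Submission
  imports Defs
begin

text \<open>
  Every inner product between distinct points has absolute value at least \<open>\<epsilon>\<close>, because the
  other two factors of a triple product are bounded by \<open>1\<close>. Fix a point \<open>x\<^sub>0\<close> and replace every
  other point \<open>x\<close> by \<open>-sgn \<langle>x\<^sub>0,x\<rangle> x\<close>: the triple condition then says that all pairwise inner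
  products of the new unit vectors are at most \<open>-\<epsilon>\<close>. For such a set the Gram bound
  \<open>0 \<le> \<parallel>\<Sum>x\<parallel>\<^sup>2 \<le> N - N(N-1)\<epsilon>\<close> gives \<open>N \<le> 1 + 1/\<epsilon>\<close>.
\<close>

lemma card_le_of_pairwise_inner_le_neg:
  fixes W :: "'a::real_inner set" and e :: real
  assumes "e > 0" and "finite W" and "W \<subseteq> cball 0 1"
    and obtuse: "\<And>x y. x \<in> W \<Longrightarrow> y \<in> W \<Longrightarrow> x \<noteq> y \<Longrightarrow> x \<bullet> y \<le> - e"
  shows "real (card W) \<le> 1 + 1 / e"
proof -
  define N where "N = real (card W)"
  have row_bound: "(\<Sum>y\<in>W. x \<bullet> y) \<le> 1 - (N - 1) * e" if x: "x \<in> W" for x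
  proof -
    have "x \<bullet> x \<le> 1"
      using x assms(3) by (auto simp: power2_norm_eq_inner[symmetric] abs_square_le_1)
    moreover have "(\<Sum>y\<in>W - {x}. x \<bullet> y) \<le> (\<Sum>y\<in>W - {x}. - e)"
      by (rule sum_mono) (use obtuse x in auto)
    moreover have "card W \<ge> 1"
      using assms(2) x by (auto simp: Suc_le_eq card_gt_0_iff)
    then have "(\<Sum>y\<in>W - {x}. - e) = - (N - 1) * e"
      using assms(2) x by (simp add: N_def card_Diff_singleton of_nat_diff algebra_simps)
    ultimately show ?thesis
      using sum.remove[OF assms(2) x, of "inner x"] by linarith
  qed
  have "0 \<le> (\<Sum>W) \<bullet> (\<Sum>W)"
    by simp
  also have "\<dots> = (\<Sum>x\<in>W. \<Sum>y\<in>W. x \<bullet> y)"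
    by (simp add: inner_sum_left inner_sum_right inner_commute)
  also have "\<dots> \<le> (\<Sum>x\<in>W. 1 - (N - 1) * e)"
    by (rule sum_mono) (rule row_bound)
  also have "\<dots> = N * (1 - (N - 1) * e)"
    by (simp add: N_def)
  finally have "0 \<le> N * (1 - (N - 1) * e)" .
  moreover have "N \<ge> 0"
    by (simp add: N_def)
  ultimately have "N = 0 \<or> (N - 1) * e \<le> 1"
    by (auto simp: zero_le_mult_iff)
  with \<open>e > 0\<close> show ?thesis
    by (auto simp: N_def field_simps)
qed

lemma inj_on_of_pairwise_inner_neg:
  fixes f :: "'a \<Rightarrow> 'b::real_inner"
  assumes "\<And>x y. x \<in> W \<Longrightarrow> y \<in> W \<Longrightarrow> x \<noteq> y \<Longrightarrow> f x \<bullet> f y < 0"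
  shows "inj_on f W"
  using assms by (metis inj_onI inner_ge_zero not_le)

lemma abs_ge_of_mult_le_neg:
  fixes a b c e :: real
  assumes "\<bar>a\<bar> \<le> 1" and "\<bar>b\<bar> \<le> 1" and "c * a * b \<le> - e"
  shows "e \<le> \<bar>c\<bar>"
proof -
  have "\<bar>c * a * b\<bar> \<le> \<bar>c\<bar> * 1"
    unfolding abs_mult mult.assoc
    using assms(1,2) by (intro mult_left_mono) (auto intro: mult_le_one)
  with assms(3) show ?thesis
    by linarith
qed

lemma sgn_mult_sgn_mult_le_neg:
  fixes a b c e :: real
  assumes "a * b * c \<le> - e" and "e \<le> \<bar>c\<bar>" and "e > 0"
  shows "sgn a * sgn b * c \<le> - e"
proof -
  have "sgn a * sgn b * sgn c = -1"
  proof -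
    have "a * b * c < 0"
      using assms(1,3) by linarith
    then show ?thesis
      by (simp flip: sgn_mult)
  qed
  then have "sgn a * sgn b * c = - \<bar>c\<bar>"
    by (metis abs_mult_sgn abs_sgn mult.commute mult.left_commute mult_minus1)
  with assms(2) show ?thesis
    by linarith
qed

lemma abs_inner_ge_of_triple_product_le_neg:
  fixes x y z :: "'a::real_inner"
  assumes "norm x \<le> 1" "norm y \<le> 1" "norm z \<le> 1"
    and "(x \<bullet> y) * (x \<bullet> z) * (y \<bullet> z) \<le> - e"
  shows "e \<le> \<bar>x \<bullet> y\<bar>"
proof -
  have "\<bar>u \<bullet> z\<bar> \<le> 1" if "norm u \<le> 1" for u
    using Cauchy_Schwarz_ineq2[of u z] mult_le_one[OF that _ assms(3)] by simp
  with assms show ?thesis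
    by (intro abs_ge_of_mult_le_neg[of "x \<bullet> z" "y \<bullet> z"]) auto
qed

definition flip_against :: "'a::real_inner \<Rightarrow> 'a \<Rightarrow> 'a" where
  "flip_against x\<^sub>0 x = (if x = x\<^sub>0 then x else - sgn (x\<^sub>0 \<bullet> x) *\<^sub>R x)"

lemma inner_flip_against_le_neg:
  assumes "e > 0" and "x\<^sub>0 \<in> W" and "x \<in> W" "y \<in> W" "x \<noteq> y"
    and separated: "\<And>u v. u \<in> W \<Longrightarrow> v \<in> W \<Longrightarrow> u \<noteq> v \<Longrightarrow> e \<le> \<bar>u \<bullet> v\<bar>"
    and triple: "x \<noteq> x\<^sub>0 \<Longrightarrow> y \<noteq> x\<^sub>0 \<Longrightarrow> (x\<^sub>0 \<bullet> x) * (x\<^sub>0 \<bullet> y) * (x \<bullet> y) \<le> - e"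
  shows "flip_against x\<^sub>0 x \<bullet> flip_against x\<^sub>0 y \<le> - e"
proof -
  have pivot: "x\<^sub>0 \<bullet> flip_against x\<^sub>0 v \<le> - e" if "v \<in> W" "v \<noteq> x\<^sub>0" for v
    using separated[OF \<open>x\<^sub>0 \<in> W\<close> that(1)] that(2)
    by (simp add: flip_against_def abs_sgn mult.commute)
  consider "x = x\<^sub>0" | "y = x\<^sub>0" | "x \<noteq> x\<^sub>0" "y \<noteq> x\<^sub>0"
    by blast
  then show ?thesis
  proof cases
    case 1
    then show ?thesis
      using pivot assms(4,5) by (simp add: flip_against_def)
  next
    case 2
    then show ?thesis
      using pivot[of x] assms(3,5) by (simp add: flip_against_def inner_commute[of _ x\<^sub>0])
  next
    case 3
    have "sgn (x\<^sub>0 \<bullet> x) * sgn (x\<^sub>0 \<bullet> y) * (x \<bullet> y) \<le> - e"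
      using triple[OF 3] separated[OF assms(3-5)] assms(1) by (rule sgn_mult_sgn_mult_le_neg)
    with 3 show ?thesis
      by (simp add: flip_against_def mult_ac)
  qed
qed

lemma norm_flip_against:
  assumes "norm x = 1" and "x \<noteq> x\<^sub>0 \<Longrightarrow> x\<^sub>0 \<bullet> x \<noteq> 0"
  shows "norm (flip_against x\<^sub>0 x) = 1"
  using assms by (auto simp: flip_against_def abs_sgn_eq)

lemma obtain_third_element:
  assumes "finite W" and "card W \<ge> 3"
  obtains z where "z \<in> W" "z \<noteq> x" "z \<noteq> y"
proof -
  have "\<not> W \<subseteq> {x, y}"
  proof
    assume "W \<subseteq> {x, y}"
    then have "card W \<le> card {x, y}"
      by (simp add: card_mono)
    also have "\<dots> \<le> 2"
      by (cases "x = y") auto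
    finally show False
      using assms(2) by linarith
  qed
  then show ?thesis
    using that by blast
qed

theorem lemma3p4:
  fixes W :: "'a::euclidean_space set" and \<epsilon> :: real
  assumes "\<epsilon> > 0"
    and "finite W" and "card W \<ge> 3"
    and "W \<subseteq> sphere 0 1"
    and "\<And>x y z. x \<in> W \<Longrightarrow> y \<in> W \<Longrightarrow> z \<in> W \<Longrightarrow> x \<noteq> y \<Longrightarrow> x \<noteq> z \<Longrightarrow> y \<noteq> z
           \<Longrightarrow> (x \<bullet> y) * (x \<bullet> z) * (y \<bullet> z) \<le> - \<epsilon>"
  shows "real (card W) \<le> 1 + 1 / \<epsilon>"
proof -
  have separated: "\<epsilon> \<le> \<bar>x \<bullet> y\<bar>" if "x \<in> W" "y \<in> W" "x \<noteq> y" for x y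
  proof -
    obtain z where "z \<in> W" "z \<noteq> x" "z \<noteq> y"
      using obtain_third_element[OF assms(2,3)] .
    with that assms(4,5) show ?thesis
      by (intro abs_inner_ge_of_triple_product_le_neg[of x y z]) auto
  qed
  obtain x\<^sub>0 where "x\<^sub>0 \<in> W"
    using assms(3) by fastforce
  let ?V = "flip_against x\<^sub>0 ` W"
  have obtuse: "flip_against x\<^sub>0 x \<bullet> flip_against x\<^sub>0 y \<le> - \<epsilon>"
    if "x \<in> W" "y \<in> W" "x \<noteq> y" for x y
    using assms(1) \<open>x\<^sub>0 \<in> W\<close> that separated
    by (rule inner_flip_against_le_neg) (use that assms(5) \<open>x\<^sub>0 \<in> W\<close> in auto)
  have "inj_on (flip_against x\<^sub>0) W"
    by (rule inj_on_of_pairwise_inner_neg) (use obtuse assms(1) in force)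
  moreover have "norm (flip_against x\<^sub>0 x) = 1" if "x \<in> W" for x
    using that assms(1,4) separated[OF \<open>x\<^sub>0 \<in> W\<close> that] by (intro norm_flip_against) auto
  then have "?V \<subseteq> cball 0 1"
    by auto
  moreover have "u \<bullet> v \<le> - \<epsilon>" if "u \<in> ?V" "v \<in> ?V" "u \<noteq> v" for u v
    using that obtuse by auto
  ultimately show ?thesis
    using card_le_of_pairwise_inner_le_neg[of \<epsilon> ?V] assms(1,2) by (simp add: card_image)
qed

end
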